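(* Let $H:B^{\mathbb{N}}\to B^{\mathbb{N}}$ be a one-sided CA with local rule $H(c)_i=H_l(c_i,c_{i+1})$ (neighborhood $\{0,1\}$) and a spreading state $q\in B$. Let $k\in\mathbb{N}$ with $k>\log_2|B|$, let $A=\{0,1,2\}^{2k}$ and let $F_{2k}:A^{\mathbb{N}}\to A^{\mathbb{N}}$ be the $2k$-fold Cartesian product of the CA $F$ on $\{0,1,2\}^{\mathbb{N}}$ defined by $F(c)_i=\rho_{c_{i+1}}(c_i)$, where $\rho_0=\rho_2$ is the permutation $0\mapsto0,1\mapsto2,2\mapsto1$ and $\rho_1$ is $0\mapsto1,1\mapsto2,2\mapsto0$. Define CA $\mathcal{F},\mathcal{G}$ on $(A\times B)^{\mathbb{N}}$ with neighborhood $\{0,1\}$ by $\mathcal{G}((a_0,b_0)(a_1,b_1))=(a_0,H_l(b_0,b_1))$ and $\mathcal{F}((a_0,b_0)(a_1,b_1))=(F_{2k}(a_0a_1),H_l(b_0,b_1))$ if $H_l(b_0,b_1)\neq q$, and $=(a_0,H_l(b_0,b_1))$ if $H_l(b_0,b_1)=q$ (here $F_{2k}(a_0a_1)$ denotes the local rule of $F_{2k}$ applied to $a_0,a_1$). Then: (1) if $H$ is not nilpotent, $h(\mathcal{F})>h(\mathcal{G})$; (2) if $H$ is nilpotent, $\mathcal{F}$ and $\mathcal{G}$ are strongly conjugate and $h(\mathcal{F})=h(\mathcal{G})=0$.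
   Context: A CA is a continuous shift-commuting self-map of a full shift $A^{\mathbb{N}}$ ($A$ finite), given by a local rule. A state $s$ is spreading if the local rule maps every neighborhood pattern containing $s$ to $s$. A CA $H$ is nilpotent if there is a state $q$ with $H({}^\omega q^\omega)={}^\omega q^\omega$ (the constant configuration) such that every configuration $c$ satisfies $H^n(c)={}^\omega q^\omega$ for some $n$. The $2k$-fold Cartesian product of $F$ acts coordinatewise on $(\{0,1,2\}^{2k})^{\mathbb{N}}$. $h$ denotes topological entropy ($\log_2$). Strong conjugacy: a homeomorphism $\phi$ with $\phi\mathcal{F}=\mathcal{G}\phi$ and $\phi\sigma=\sigma\phi$. *)

theory Defs
  imports "HOL-Analysis.Analysis"
begin

definition configs :: "'a set \<Rightarrow> (nat \<Rightarrow> 'a) set" where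
  "configs S = {c. \<forall>i. c i \<in> S}"

definition shift_space :: "'a set \<Rightarrow> (nat \<Rightarrow> 'a) topology" where
  "shift_space S = product_topology (\<lambda>_. discrete_topology S) UNIV"

definition shift :: "(nat \<Rightarrow> 'a) \<Rightarrow> (nat \<Rightarrow> 'a)" where
  "shift c = (\<lambda>i. c (Suc i))"

definition ca2 :: "('a \<Rightarrow> 'a \<Rightarrow> 'a) \<Rightarrow> (nat \<Rightarrow> 'a) \<Rightarrow> (nat \<Rightarrow> 'a)" where
  "ca2 f c = (\<lambda>i. f (c i) (c (Suc i)))"

definition spreading :: "('a \<Rightarrow> 'a \<Rightarrow> 'a) \<Rightarrow> 'a \<Rightarrow> bool" where
  "spreading f s \<longleftrightarrow> (\<forall>x. f s x = s \<and> f x s = s)"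

definition nilpotent_on :: "'a set \<Rightarrow> ((nat \<Rightarrow> 'a) \<Rightarrow> (nat \<Rightarrow> 'a)) \<Rightarrow> bool" where
  "nilpotent_on S H \<longleftrightarrow> (\<exists>q\<in>S. H (\<lambda>_. q) = (\<lambda>_. q) \<and>
       (\<forall>c\<in>configs S. \<exists>n. (H ^^ n) c = (\<lambda>_. q)))"

definition st_patterns :: "'a set \<Rightarrow> ((nat \<Rightarrow> 'a) \<Rightarrow> (nat \<Rightarrow> 'a)) \<Rightarrow> nat \<Rightarrow> nat \<Rightarrow> (nat \<Rightarrow> nat \<Rightarrow> 'a) set" where
  "st_patterns S F w t =
     (\<lambda>c. \<lambda>i j. if i < t \<and> j < w then (F ^^ i) c j else undefined) ` configs S"

definition ca_entropy :: "'a set \<Rightarrow> ((nat \<Rightarrow> 'a) \<Rightarrow> (nat \<Rightarrow> 'a)) \<Rightarrow> ereal" where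
  "ca_entropy S F = (SUP w. limsup (\<lambda>t. ereal (log 2 (real (card (st_patterns S F w t))) / real t)))"

definition strongly_conjugate :: "'a set \<Rightarrow> ((nat \<Rightarrow> 'a) \<Rightarrow> (nat \<Rightarrow> 'a)) \<Rightarrow> ((nat \<Rightarrow> 'a) \<Rightarrow> (nat \<Rightarrow> 'a)) \<Rightarrow> bool" where
  "strongly_conjugate S F G \<longleftrightarrow> (\<exists>\<phi>. homeomorphic_map (shift_space S) (shift_space S) \<phi> \<and>
      (\<forall>c\<in>configs S. \<phi> (F c) = G (\<phi> c)) \<and> (\<forall>c\<in>configs S. \<phi> (shift c) = shift (\<phi> c)))"

definition rho :: "nat \<Rightarrow> nat \<Rightarrow> nat" where
  "rho s x = (if s = 1 then (if x = 0 then 1 else if x = 1 then 2 else 0)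
              else (if x = 0 then 0 else if x = 1 then 2 else 1))"

definition alphA :: "nat \<Rightarrow> nat list set" where
  "alphA k = {xs. length xs = 2 * k \<and> set xs \<subseteq> {0, 1, 2}}"

definition F2k_local :: "nat list \<Rightarrow> nat list \<Rightarrow> nat list" where
  "F2k_local a0 a1 = map2 (\<lambda>x y. rho y x) a0 a1"

definition calG_local :: "('b \<Rightarrow> 'b \<Rightarrow> 'b) \<Rightarrow> nat list \<times> 'b \<Rightarrow> nat list \<times> 'b \<Rightarrow> nat list \<times> 'b" where
  "calG_local Hl x y = (fst x, Hl (snd x) (snd y))"

definition calF_local :: "('b \<Rightarrow> 'b \<Rightarrow> 'b) \<Rightarrow> 'b \<Rightarrow> nat list \<times> 'b \<Rightarrow> nat list \<times> 'b \<Rightarrow> nat list \<times> 'b" where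
  "calF_local Hl q x y = (if Hl (snd x) (snd y) \<noteq> q
      then (F2k_local (fst x) (fst y), Hl (snd x) (snd y))
      else (fst x, Hl (snd x) (snd y)))"

end

theory Submission
  imports Defs
begin

text \<open>If H is not nilpotent, compactness yields a configuration b whose H-orbit never meets
  the spreading state q. Above b the gate of calF is always open, so calF acts on the A-layer as
  F_2k. For F, configurations carrying free bits at the even sites and 0 at the odd sites are
  told apart by their column at site 0, since a difference at an even site travels to the left
  at speed one. Hence the width-one patterns of height t number at least 2^(k t), and
  h(calF) >= k > log |B| >= h(calG), as calG never changes the A-layer.

  If H is nilpotent, then, q being spreading, some power H^N is constantly q. From time N on
  every gate is closed, so both calF and calG become fixed after N steps and have entropy 0.
  Replacing the A-layer of a configuration by that of its calF^N-image and keeping the B-layer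
  is a shift-commuting conjugacy from calF to calG; it is invertible because each rho_y is a
  permutation and the inverse of the gated F_2k step only needs two cells of lookahead.\<close>

section \<open>Cellular automata on the one-sided shift\<close>

lemma ca2_funpow_Suc: "(ca2 f ^^ Suc n) c j = f ((ca2 f ^^ n) c j) ((ca2 f ^^ n) c (Suc j))"
  by (simp add: ca2_def)

lemma ca2_funpow_cong:
  assumes "\<And>i. j \<le> i \<Longrightarrow> i \<le> j + n \<Longrightarrow> c i = c' i"
  shows "(ca2 f ^^ n) c j = (ca2 f ^^ n) c' j"
  using assms
proof (induction n arbitrary: j)
  case (Suc n)
  have "(ca2 f ^^ n) c j = (ca2 f ^^ n) c' j" "(ca2 f ^^ n) c (Suc j) = (ca2 f ^^ n) c' (Suc j)"
    by (rule Suc.IH; use Suc.prems in auto)+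
  then show ?case by (simp only: ca2_funpow_Suc)
qed simp

lemma ca2_funpow_translate: "(ca2 f ^^ n) (\<lambda>i. c (i + j)) i = (ca2 f ^^ n) c (i + j)"
  by (induction n arbitrary: i) (auto simp: ca2_def)

lemma ca2_funpow_shift: "(ca2 f ^^ n) (shift c) = shift ((ca2 f ^^ n) c)"
  using ca2_funpow_translate[where f=f and n=n and c=c and j=1] by (simp add: shift_def fun_eq_iff)

lemma ca2_funpow_configs:
  assumes "\<And>x y. x \<in> S \<Longrightarrow> y \<in> S \<Longrightarrow> f x y \<in> S" "c \<in> configs S"
  shows "(ca2 f ^^ n) c \<in> configs S"
  using assms(2) by (induction n) (auto simp: configs_def ca2_def assms(1))

definition prefix_determined :: "'a set \<Rightarrow> nat \<Rightarrow> ((nat \<Rightarrow> 'a) \<Rightarrow> 'c) \<Rightarrow> bool" where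
  "prefix_determined S M \<phi> \<longleftrightarrow>
     (\<forall>c\<in>configs S. \<forall>c'\<in>configs S. (\<forall>i<M. c i = c' i) \<longrightarrow> \<phi> c = \<phi> c')"

lemma prefix_determined_ca2_funpow:
  "prefix_determined S (Suc (j + n)) (\<lambda>c. (ca2 f ^^ n) c j)"
  unfolding prefix_determined_def
  by (intro ballI impI ca2_funpow_cong) auto

lemma topspace_shift_space: "topspace (shift_space S) = configs S"
  by (auto simp: shift_space_def topspace_product_topology configs_def PiE_def extensional_def)

lemma compact_space_shift_space: "finite S \<Longrightarrow> compact_space (shift_space S)"
  by (simp add: shift_space_def compact_space_product_topology compact_space_discrete_topology)

lemma Hausdorff_space_shift_space: "Hausdorff_space (shift_space S)"
  by (simp add: shift_space_def Hausdorff_space_product_topology Hausdorff_space_discrete_topology)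

lemma openin_shift_space_cylinder:
  assumes "x \<in> configs S"
  shows "openin (shift_space S) {c \<in> configs S. \<forall>i<M. c i = x i}"
proof -
  have eq: "{c \<in> configs S. \<forall>i<M. c i = x i} = PiE UNIV (\<lambda>i. if i < M then {x i} else S)"
    using assms by (auto simp: configs_def PiE_def extensional_def split: if_splits)
  have "finite {i. (if i < M then {x i} else S) \<noteq> S}"
    by (rule finite_subset[of _ "{..<M}"]) auto
  then show ?thesis
    unfolding eq shift_space_def using assms by (subst openin_PiE_gen) (auto simp: configs_def)
qed

lemma continuous_map_prefix_determined:
  assumes "prefix_determined S M \<phi>" and "\<And>c. c \<in> configs S \<Longrightarrow> \<phi> c \<in> T"
  shows "continuous_map (shift_space S) (discrete_topology T) \<phi>"
  unfolding continuous_map_def topspace_shift_space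
proof (intro conjI allI impI)
  show "\<phi> \<in> configs S \<rightarrow> topspace (discrete_topology T)"
    using assms(2) by auto
  fix U
  show "openin (shift_space S) {c \<in> configs S. \<phi> c \<in> U}"
  proof (subst openin_subopen, intro ballI)
    fix x assume x: "x \<in> {c \<in> configs S. \<phi> c \<in> U}"
    let ?Z = "{c \<in> configs S. \<forall>i<M. c i = x i}"
    have "?Z \<subseteq> {c \<in> configs S. \<phi> c \<in> U}"
    proof
      fix c assume c: "c \<in> ?Z"
      then have "\<phi> c = \<phi> x"
        using assms(1) x unfolding prefix_determined_def by simp
      with c x show "c \<in> {c \<in> configs S. \<phi> c \<in> U}" by simp
    qed
    then show "\<exists>T. openin (shift_space S) T \<and> x \<in> T \<and> T \<subseteq> {c \<in> configs S. \<phi> c \<in> U}"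
      using openin_shift_space_cylinder[of x S M] x by blast
  qed
qed

lemma continuous_map_shift_spaceI:
  assumes "\<And>j. \<exists>M. prefix_determined S M (\<lambda>c. \<phi> c j)"
    and "\<And>c. c \<in> configs S \<Longrightarrow> \<phi> c \<in> configs S'"
  shows "continuous_map (shift_space S) (shift_space S') \<phi>"
  unfolding shift_space_def continuous_map_componentwise_UNIV
proof
  fix j
  obtain M where "prefix_determined S M (\<lambda>c. \<phi> c j)" using assms(1) by blast
  then show "continuous_map (product_topology (\<lambda>_. discrete_topology S) UNIV) (discrete_topology S') (\<lambda>c. \<phi> c j)"
    using continuous_map_prefix_determined[of S M "\<lambda>c. \<phi> c j" S'] assms(2)
    by (auto simp: shift_space_def configs_def)
qed

lemma compact_shift_space_nest:
  assumes "finite S"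
    and "\<And>n. \<exists>M. prefix_determined S M (P n)"
    and "\<And>n. \<exists>c\<in>configs S. P n c"
    and "\<And>n c. c \<in> configs S \<Longrightarrow> P (Suc n) c \<Longrightarrow> P n c"
  shows "\<exists>c\<in>configs S. \<forall>n. P n c"
proof -
  define C where "C n = {c \<in> configs S. P n c}" for n
  have "closedin (shift_space S) (C n)" for n
  proof -
    obtain M where "prefix_determined S M (P n)" using assms(2) by blast
    then have "continuous_map (shift_space S) (discrete_topology UNIV) (P n)"
      by (rule continuous_map_prefix_determined) simp
    from closedin_continuous_map_preimage[OF this, of "{True}"]
    show ?thesis by (simp add: C_def topspace_shift_space)
  qed
  moreover have "decseq C"
    by (rule decseq_SucI) (use assms(4) in \<open>auto simp: C_def\<close>)
  moreover have "C n \<noteq> {}" for n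
    using assms(3)[of n] by (auto simp: C_def)
  ultimately have "\<Inter> (range C) \<noteq> {}"
    using compact_space_imp_nest[OF compact_space_shift_space[OF assms(1)]] by auto
  then show ?thesis by (auto simp: C_def)
qed

lemma strongly_conjugateI:
  assumes "finite S" and "bij_betw \<phi> (configs S) (configs S)"
    and "\<And>j. \<exists>M. prefix_determined S M (\<lambda>c. \<phi> c j)"
    and "\<And>c. c \<in> configs S \<Longrightarrow> \<phi> (F c) = G (\<phi> c)"
    and "\<And>c. c \<in> configs S \<Longrightarrow> \<phi> (shift c) = shift (\<phi> c)"
  shows "strongly_conjugate S F G"
proof -
  have "homeomorphic_map (shift_space S) (shift_space S) \<phi>"
  proof (rule continuous_imp_homeomorphic_map)
    show "continuous_map (shift_space S) (shift_space S) \<phi>"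
      using assms(2,3) by (intro continuous_map_shift_spaceI) (auto simp: bij_betw_def)
  qed (use assms(1,2) in \<open>simp_all add: compact_space_shift_space Hausdorff_space_shift_space
          topspace_shift_space bij_betw_def\<close>)
  then show ?thesis
    using assms(4,5) unfolding strongly_conjugate_def by blast
qed

section \<open>Space-time patterns and entropy\<close>

definition st_pattern :: "((nat \<Rightarrow> 'a) \<Rightarrow> (nat \<Rightarrow> 'a)) \<Rightarrow> nat \<Rightarrow> nat \<Rightarrow> (nat \<Rightarrow> 'a) \<Rightarrow> (nat \<Rightarrow> nat \<Rightarrow> 'a)" where
  "st_pattern \<Phi> w t c = (\<lambda>i j. if i < t \<and> j < w then (\<Phi> ^^ i) c j else undefined)"

lemma st_patterns_eq_image: "st_patterns S \<Phi> w t = st_pattern \<Phi> w t ` configs S"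
  by (simp add: st_patterns_def st_pattern_def)

lemma st_patterns_finite_card_le:
  assumes "finite E" and "g ` configs S \<subseteq> E"
    and "\<And>c c'. c \<in> configs S \<Longrightarrow> c' \<in> configs S \<Longrightarrow> g c = g c' \<Longrightarrow>
           \<forall>i<t. \<forall>j<w. (\<Phi> ^^ i) c j = (\<Phi> ^^ i) c' j"
  shows "finite (st_patterns S \<Phi> w t) \<and> card (st_patterns S \<Phi> w t) \<le> card E"
proof -
  let ?X = "configs S" and ?p = "st_pattern \<Phi> w t"
  have "?p (inv_into ?X g (g c)) = ?p c" if "c \<in> ?X" for c
  proof -
    have "inv_into ?X g (g c) \<in> ?X" "g (inv_into ?X g (g c)) = g c"
      using that by (simp_all add: inv_into_into f_inv_into_f)
    with that show ?thesis by (auto simp: st_pattern_def fun_eq_iff dest: assms(3))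
  qed
  then have eq: "st_patterns S \<Phi> w t = (?p \<circ> inv_into ?X g) ` g ` ?X"
    unfolding st_patterns_eq_image image_comp by (intro image_cong) simp_all
  have "finite (g ` ?X)" using assms(1,2) by (rule finite_subset[rotated])
  moreover have "card (g ` ?X) \<le> card E" using assms(1,2) by (rule card_mono)
  ultimately show ?thesis
    unfolding eq using card_image_le le_trans by blast
qed

lemma restrict_lessThan_eq_iff: "restrict f {..<n} = restrict g {..<n} \<longleftrightarrow> (\<forall>i<n. f i = g i)"
  by (auto simp: fun_eq_iff)

lemma finite_st_patterns_ca2:
  assumes "finite S"
  shows "finite (st_patterns S (ca2 f) w t)"
proof -
  have "finite (st_patterns S (ca2 f) w t) \<and>
        card (st_patterns S (ca2 f) w t) \<le> card (PiE {..<w + t} (\<lambda>_. S))"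
  proof (rule st_patterns_finite_card_le[where g = "\<lambda>c. restrict c {..<w + t}"])
    show "finite (PiE {..<w + t} (\<lambda>_. S))" using assms by (simp add: finite_PiE)
    show "(\<lambda>c. restrict c {..<w + t}) ` configs S \<subseteq> PiE {..<w + t} (\<lambda>_. S)"
      by (auto simp: configs_def PiE_iff split: if_splits)
    fix c c' :: "nat \<Rightarrow> 'a" assume "restrict c {..<w + t} = restrict c' {..<w + t}"
    then have "\<forall>i<w + t. c i = c' i" by (simp add: restrict_lessThan_eq_iff)
    then show "\<forall>i<t. \<forall>j<w. (ca2 f ^^ i) c j = (ca2 f ^^ i) c' j"
      by (auto intro!: ca2_funpow_cong)
  qed
  then show ?thesis ..
qed

lemma log2_of_nat_nonneg: "0 \<le> log 2 (real n)"
  by (cases "n = 0") (auto simp: log_def)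

lemma ca_entropy_nonneg: "0 \<le> ca_entropy S \<Phi>"
proof -
  have "0 \<le> limsup (\<lambda>t. ereal (log 2 (real (card (st_patterns S \<Phi> 0 t))) / real t))"
    by (intro le_Limsup always_eventually allI) (simp_all add: log2_of_nat_nonneg)
  then show ?thesis
    unfolding ca_entropy_def by (rule SUP_upper2[OF UNIV_I])
qed

lemma ca_entropy_le_log:
  fixes b :: real
  assumes b: "1 \<le> b"
    and bound: "\<And>w. \<exists>M. \<forall>t. real (card (st_patterns S \<Phi> w t)) \<le> M * b ^ t"
  shows "ca_entropy S \<Phi> \<le> ereal (log 2 b)"
  unfolding ca_entropy_def
proof (rule SUP_least)
  fix w
  let ?h = "\<lambda>t. log 2 (real (card (st_patterns S \<Phi> w t))) / real t"
  obtain M where M: "\<And>t. real (card (st_patterns S \<Phi> w t)) \<le> M * b ^ t"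
    using bound by blast
  define M' where "M' = max M 1"
  have M': "1 \<le> M'" "\<And>t. real (card (st_patterns S \<Phi> w t)) \<le> M' * b ^ t"
    unfolding M'_def using b by (auto intro: order_trans[OF M] mult_right_mono)
  have "?h t \<le> log 2 b + log 2 M' / real t" if "0 < t" for t
  proof -
    have "log 2 (real (card (st_patterns S \<Phi> w t))) \<le> log 2 (M' * b ^ t)"
    proof (cases "card (st_patterns S \<Phi> w t) = 0")
      case True
      have "1 * 1 \<le> M' * b ^ t" by (intro mult_mono one_le_power) (use M'(1) b in auto)
      then show ?thesis using True by (simp add: log_def)
    qed (use M' in \<open>simp add: log_mono\<close>)
    also have "\<dots> = log 2 M' + real t * log 2 b"
      using M' b by (simp add: log_mult log_nat_power)
    finally show ?thesis using that by (simp add: divide_simps mult.commute)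
  qed
  then have "limsup (\<lambda>t. ereal (?h t)) \<le> limsup (\<lambda>t. ereal (log 2 b + log 2 M' / real t))"
    by (intro Limsup_mono eventually_mono[OF eventually_gt_at_top[of 0]]) simp
  also have "\<dots> = ereal (log 2 b)"
  proof (rule lim_imp_Limsup)
    have "(\<lambda>t. log 2 b + log 2 M' / real t) \<longlonglongrightarrow> log 2 b + 0"
      by (intro tendsto_add tendsto_const lim_const_over_n)
    then show "(\<lambda>t. ereal (log 2 b + log 2 M' / real t)) \<longlonglongrightarrow> ereal (log 2 b)"
      by (simp add: lim_ereal)
  qed simp
  finally show "limsup (\<lambda>t. ereal (?h t)) \<le> ereal (log 2 b)" .
qed

lemma ca_entropy_ge_log:
  fixes b :: real
  assumes "0 < b" and "\<And>t. b ^ t \<le> real (card (st_patterns S \<Phi> w t))"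
  shows "ereal (log 2 b) \<le> ca_entropy S \<Phi>"
  unfolding ca_entropy_def
proof (rule SUP_upper2)
  have "log 2 b \<le> log 2 (real (card (st_patterns S \<Phi> w t))) / real t" if "0 < t" for t
  proof -
    have "real t * log 2 b = log 2 (b ^ t)" using assms(1) by (simp add: log_nat_power)
    also have "\<dots> \<le> log 2 (real (card (st_patterns S \<Phi> w t)))"
      using assms by (simp add: log_mono)
    finally show ?thesis using that by (simp add: divide_simps mult.commute)
  qed
  then have "limsup (\<lambda>t::nat. ereal (log 2 b))
      \<le> limsup (\<lambda>t. ereal (log 2 (real (card (st_patterns S \<Phi> w t))) / real t))"
    by (intro Limsup_mono eventually_mono[OF eventually_gt_at_top[of 0]]) simp
  then show "ereal (log 2 b) \<le> limsup (\<lambda>t. ereal (log 2 (real (card (st_patterns S \<Phi> w t))) / real t))"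
    by (simp add: Limsup_const)
qed simp

lemma ca_entropy_ca2_eventually_fixed:
  assumes "finite S" and fixed: "\<And>c m. c \<in> configs S \<Longrightarrow> (ca2 f ^^ (N + m)) c = (ca2 f ^^ N) c"
  shows "ca_entropy S (ca2 f) = 0"
proof (rule antisym)
  have "card (st_patterns S (ca2 f) w t) \<le> card (PiE {..<w + N} (\<lambda>_. S))" for w t
  proof (rule st_patterns_finite_card_le[where g = "\<lambda>c. restrict c {..<w + N}", THEN conjunct2])
    show "finite (PiE {..<w + N} (\<lambda>_. S))" using assms(1) by (simp add: finite_PiE)
    show "(\<lambda>c. restrict c {..<w + N}) ` configs S \<subseteq> PiE {..<w + N} (\<lambda>_. S)"
      by (auto simp: configs_def PiE_iff split: if_splits)
    fix c c' :: "nat \<Rightarrow> 'a"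
    assume cc': "c \<in> configs S" "c' \<in> configs S" "restrict c {..<w + N} = restrict c' {..<w + N}"
    then have agree: "\<forall>i<w + N. c i = c' i" by (simp add: restrict_lessThan_eq_iff)
    have "(ca2 f ^^ i) c j = (ca2 f ^^ i) c' j" if "i < t" "j < w" for i j
    proof (cases "i \<le> N")
      case True
      then show ?thesis by (intro ca2_funpow_cong) (use agree that in auto)
    next
      case False
      then obtain m where "i = N + m" by (metis le_add_diff_inverse nle_le)
      moreover have "(ca2 f ^^ N) c j = (ca2 f ^^ N) c' j"
        by (intro ca2_funpow_cong) (use agree that in auto)
      ultimately show ?thesis using fixed cc'(1,2) by simp
    qed
    then show "\<forall>i<t. \<forall>j<w. (ca2 f ^^ i) c j = (ca2 f ^^ i) c' j" by blast
  qed
  then have "\<exists>M. \<forall>t. real (card (st_patterns S (ca2 f) w t)) \<le> M * 1 ^ t" for w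
    by (intro exI[of _ "real (card (PiE {..<w + N} (\<lambda>_. S)))"]) simp
  from ca_entropy_le_log[OF order_refl this]
  show "ca_entropy S (ca2 f) \<le> 0" by (simp add: zero_ereal_def)
qed (rule ca_entropy_nonneg)

section \<open>Spreading states and nilpotency\<close>

lemma ca2_funpow_const: "f q q = q \<Longrightarrow> (ca2 f ^^ n) (\<lambda>_. q) = (\<lambda>_. q)"
  by (induction n) (auto simp: ca2_def)

lemma spreading_funpow_eq:
  assumes "spreading Hl q" and "(ca2 Hl ^^ n) b p = q" and "j \<le> p" "p \<le> j + m"
  shows "(ca2 Hl ^^ (n + m)) b j = q"
  using assms(3,4)
proof (induction m arbitrary: j)
  case 0
  then show ?case using assms(2) by simp
next
  case (Suc m)
  have "(ca2 Hl ^^ (n + m)) b j = q \<or> (ca2 Hl ^^ (n + m)) b (Suc j) = q"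
  proof (cases "p \<le> j + m")
    case True
    then show ?thesis using Suc.IH Suc.prems(1) by blast
  next
    case False
    then have "Suc j \<le> p" "p \<le> Suc j + m" using Suc.prems by simp_all
    then show ?thesis using Suc.IH by blast
  qed
  moreover have "(ca2 Hl ^^ (n + Suc m)) b j =
      Hl ((ca2 Hl ^^ (n + m)) b j) ((ca2 Hl ^^ (n + m)) b (Suc j))"
    by (simp add: ca2_def)
  ultimately show ?case using assms(1) unfolding spreading_def by metis
qed

lemma spreading_dichotomy:
  fixes Hl :: "'b::finite \<Rightarrow> 'b \<Rightarrow> 'b"
  assumes sp: "spreading Hl q"
  shows "(\<exists>N. \<forall>c. (ca2 Hl ^^ N) c = (\<lambda>_. q)) \<or> (\<exists>b. \<forall>n j. (ca2 Hl ^^ n) b j \<noteq> q)"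
proof (cases "\<exists>N. \<forall>c. (ca2 Hl ^^ N) c 0 = q")
  case True
  then obtain N where N: "\<And>c. (ca2 Hl ^^ N) c 0 = q" by blast
  have "(ca2 Hl ^^ N) c j = q" for c j
    using ca2_funpow_translate[where f=Hl and n=N and c=c and j=j and i=0] N by simp
  then show ?thesis by blast
next
  case False
  have "\<exists>b\<in>configs UNIV. \<forall>n. (ca2 Hl ^^ n) b 0 \<noteq> q"
  proof (rule compact_shift_space_nest)
    show "\<exists>M. prefix_determined UNIV M (\<lambda>c. (ca2 Hl ^^ n) c 0 \<noteq> q)" for n
      using prefix_determined_ca2_funpow[of UNIV 0 n Hl]
      unfolding prefix_determined_def by metis
    show "\<exists>c\<in>configs UNIV. (ca2 Hl ^^ n) c 0 \<noteq> q" for n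
      using False by (auto simp: configs_def)
    show "(ca2 Hl ^^ n) c 0 \<noteq> q" if "(ca2 Hl ^^ Suc n) c 0 \<noteq> q" for n c
      using spreading_funpow_eq[OF sp, of n c 0 0 1] that by auto
  qed simp
  then obtain b where b: "\<And>n. (ca2 Hl ^^ n) b 0 \<noteq> q" by blast
  have "(ca2 Hl ^^ n) b j \<noteq> q" for n j
    using spreading_funpow_eq[OF sp, of n b j 0 j] b[of "n + j"] by auto
  then show ?thesis by blast
qed

lemma spreading_nilpotent_on_iff:
  fixes Hl :: "'b::finite \<Rightarrow> 'b \<Rightarrow> 'b"
  assumes sp: "spreading Hl q"
  shows "nilpotent_on UNIV (ca2 Hl) \<longleftrightarrow> (\<exists>N. \<forall>c. (ca2 Hl ^^ N) c = (\<lambda>_. q))"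
proof
  have fix_q: "(ca2 Hl ^^ n) (\<lambda>_. q) = (\<lambda>_. q)" for n
    using sp by (intro ca2_funpow_const) (simp add: spreading_def)
  assume "nilpotent_on UNIV (ca2 Hl)"
  then obtain q' where reach: "\<And>c. \<exists>n. (ca2 Hl ^^ n) c = (\<lambda>_. q')"
    by (auto simp: nilpotent_on_def configs_def)
  have "q' = q" using reach[of "\<lambda>_. q"] fix_q by (metis)
  then show "\<exists>N. \<forall>c. (ca2 Hl ^^ N) c = (\<lambda>_. q)"
    using spreading_dichotomy[OF sp] reach by metis
next
  assume "\<exists>N. \<forall>c. (ca2 Hl ^^ N) c = (\<lambda>_. q)"
  moreover have "ca2 Hl (\<lambda>_. q) = (\<lambda>_. q)"
    using sp by (simp add: ca2_def spreading_def)
  ultimately show "nilpotent_on UNIV (ca2 Hl)"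
    unfolding nilpotent_on_def by blast
qed

lemma ca2_funpow_const_after:
  assumes "\<And>c. (ca2 Hl ^^ N) c = (\<lambda>_. q)" and "N \<le> n"
  shows "(ca2 Hl ^^ n) c = (\<lambda>_. q)"
  using assms funpow_add[of N "n - N" "ca2 Hl"] by simp

section \<open>The CA F and its products\<close>

abbreviation rho_ca :: "(nat \<Rightarrow> nat) \<Rightarrow> (nat \<Rightarrow> nat)" where
  "rho_ca \<equiv> ca2 (\<lambda>x y. rho y x)"

definition parity_config :: "(nat \<Rightarrow> nat) \<Rightarrow> bool" where
  "parity_config c \<longleftrightarrow> (\<forall>j. if even j then c j \<in> {0, 1} else c j = 0)"

lemma rho_ca_funpow_parity:
  assumes "parity_config c"
  shows "(rho_ca ^^ s) c j \<in> (if even (j + s) then {0, 1} else {0, 2})"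
proof (induction s arbitrary: j)
  case 0
  show ?case using assms[unfolded parity_config_def, rule_format, of j] by (auto split: if_splits)
next
  case (Suc s)
  show ?case
    using Suc.IH[of j] Suc.IH[of "Suc j"] unfolding ca2_funpow_Suc
    by (cases "even (j + s)") (auto simp: rho_def)
qed

text \<open>A difference at an even site n propagates to the left at speed one: the left neighbour
  of the differing cell is a common value in {0,2}, on which rho 0 and rho 1 disagree.\<close>

lemma rho_ca_funpow_diagonal_neq:
  assumes c: "parity_config c" and c': "parity_config c'"
    and agree: "\<forall>i<n. c i = c' i" and neq: "c n \<noteq> c' n" and "even n" and "s \<le> n"
  shows "(rho_ca ^^ s) c (n - s) \<noteq> (rho_ca ^^ s) c' (n - s)"
  using \<open>s \<le> n\<close>
proof (induction s)
  case 0
  then show ?case using neq by simp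
next
  case (Suc s)
  define j where "j = n - Suc s"
  have Suc_j: "Suc j = n - s" and odd_j: "odd (j + s)"
    using Suc.prems \<open>even n\<close> by (auto simp: j_def)
  have right: "(rho_ca ^^ s) c (Suc j) \<noteq> (rho_ca ^^ s) c' (Suc j)"
    using Suc by (simp add: Suc_j)
  have "(rho_ca ^^ s) c (Suc j) \<in> {0, 1}" "(rho_ca ^^ s) c' (Suc j) \<in> {0, 1}"
    using rho_ca_funpow_parity[OF c, of s "Suc j"] rho_ca_funpow_parity[OF c', of s "Suc j"] odd_j
    by auto
  moreover have "(rho_ca ^^ s) c j = (rho_ca ^^ s) c' j"
    by (rule ca2_funpow_cong) (use agree Suc.prems in \<open>auto simp: j_def\<close>)
  moreover have "(rho_ca ^^ s) c j \<in> {0, 2}"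
    using rho_ca_funpow_parity[OF c, of s j] odd_j by auto
  ultimately show ?case
    using right unfolding j_def[symmetric] ca2_funpow_Suc by (auto simp: rho_def)
qed

lemma rho_ca_column_inj:
  assumes c: "parity_config c" and c': "parity_config c'"
    and column: "\<forall>n<T. (rho_ca ^^ n) c 0 = (rho_ca ^^ n) c' 0"
  shows "\<forall>i<T. c i = c' i"
proof (rule ccontr)
  assume "\<not> (\<forall>i<T. c i = c' i)"
  then obtain i where i: "i < T" "c i \<noteq> c' i" by blast
  define n where "n = (LEAST i. c i \<noteq> c' i)"
  have n: "c n \<noteq> c' n" "n \<le> i" "\<forall>i<n. c i = c' i"
    unfolding n_def
    by (rule LeastI[of _ i], fact i(2), rule Least_le, fact i(2), use not_less_Least in blast)
  have "even n"
    using c c' n(1) unfolding parity_config_def by metis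
  from rho_ca_funpow_diagonal_neq[OF c c' n(3,1) this order_refl]
  show False using column n(2) i(1) by simp
qed

lemma length_F2k_local: "length (F2k_local x y) = min (length x) (length y)"
  by (simp add: F2k_local_def)

lemma nth_F2k_local: "m < length x \<Longrightarrow> m < length y \<Longrightarrow> F2k_local x y ! m = rho (y ! m) (x ! m)"
  by (simp add: F2k_local_def)

lemma F2k_local_in_alphA:
  assumes "x \<in> alphA k" "y \<in> alphA k"
  shows "F2k_local x y \<in> alphA k"
proof -
  have "rho b a \<in> {0, 1, 2}" for a b
    by (simp add: rho_def)
  then have "set (F2k_local x y) \<subseteq> {0, 1, 2}"
    unfolding F2k_local_def set_map by (intro image_subsetI) (simp only: case_prod_beta)
  then show ?thesis using assms by (simp add: alphA_def length_F2k_local)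
qed

lemma finite_alphA: "finite (alphA k)"
proof -
  have "alphA k = {xs. set xs \<subseteq> {0, 1, 2} \<and> length xs = 2 * k}"
    by (auto simp: alphA_def)
  then show ?thesis using finite_lists_length_eq[of "{0::nat, 1, 2}" "2 * k"] by simp
qed

lemma length_alphA: "xs \<in> alphA k \<Longrightarrow> length xs = 2 * k"
  by (simp add: alphA_def)

lemma nth_in_alphA:
  assumes "xs \<in> alphA k" "i < 2 * k"
  shows "xs ! i \<in> {0, 1, 2}"
proof -
  have "xs ! i \<in> set xs" using assms by (simp add: alphA_def)
  then show ?thesis using assms(1) by (auto simp: alphA_def)
qed

lemma ca2_F2k_local_funpow_nth:
  assumes a: "a \<in> configs (alphA k)" and m: "m < 2 * k"
  shows "(ca2 F2k_local ^^ s) a j ! m = (rho_ca ^^ s) (\<lambda>i. a i ! m) j"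
proof (induction s arbitrary: j)
  case (Suc s)
  have "length ((ca2 F2k_local ^^ s) a i) = 2 * k" for i
    using ca2_funpow_configs[OF F2k_local_in_alphA a, where n=s] by (auto simp: configs_def alphA_def)
  then show ?case unfolding ca2_funpow_Suc using Suc.IH m by (simp add: nth_F2k_local)
qed simp

section \<open>Inverting the gated product\<close>

definition rho_inv :: "nat \<Rightarrow> nat \<Rightarrow> nat" where
  "rho_inv y d = (if y = 1 then (if d = 0 then 2 else if d = 1 then 0 else 1)
                  else (if d = 0 then 0 else if d = 1 then 2 else 1))"

lemma rho_inv_rho: "x \<in> {0, 1, 2} \<Longrightarrow> rho_inv y (rho y x) = x"
  by (auto simp: rho_inv_def rho_def)

lemma rho_rho_inv: "d \<in> {0, 1, 2} \<Longrightarrow> rho y (rho_inv y d) = d"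
  by (auto simp: rho_inv_def rho_def)

lemma rho_inv_range: "rho_inv y d \<in> {0, 1, 2}"
  by (simp add: rho_inv_def)

lemma rho_inv_rho_inv_cong: "rho_inv (rho_inv x e) d = rho_inv (rho_inv x' e) d"
  by (simp add: rho_inv_def)

definition F2k_inv_local :: "nat list \<Rightarrow> nat list \<Rightarrow> nat list" where
  "F2k_inv_local d e = map2 (\<lambda>d x. rho_inv x d) d e"

lemma length_F2k_inv_local: "length (F2k_inv_local x y) = min (length x) (length y)"
  by (simp add: F2k_inv_local_def)

lemma nth_F2k_inv_local:
  "m < length x \<Longrightarrow> m < length y \<Longrightarrow> F2k_inv_local x y ! m = rho_inv (y ! m) (x ! m)"
  by (simp add: F2k_inv_local_def)

lemma F2k_inv_local_in_alphA:
  assumes "x \<in> alphA k" "y \<in> alphA k"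
  shows "F2k_inv_local x y \<in> alphA k"
proof -
  have "set (F2k_inv_local x y) \<subseteq> {0, 1, 2}"
    unfolding F2k_inv_local_def set_map by (intro image_subsetI) (simp only: case_prod_beta rho_inv_range)
  then show ?thesis using assms by (simp add: alphA_def length_F2k_inv_local)
qed

lemma F2k_inv_local_F2k_local:
  assumes "x \<in> alphA k" "y \<in> alphA k"
  shows "F2k_inv_local (F2k_local x y) y = x"
  using assms
  by (intro nth_equalityI)
     (simp_all add: length_F2k_inv_local length_F2k_local length_alphA nth_F2k_inv_local
       nth_F2k_local rho_inv_rho[OF nth_in_alphA[OF assms(1)]])

lemma F2k_local_F2k_inv_local:
  assumes "d \<in> alphA k" "y \<in> alphA k"
  shows "F2k_local (F2k_inv_local d y) y = d"
  using assms
  by (intro nth_equalityI)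
     (simp_all add: length_F2k_inv_local length_F2k_local length_alphA nth_F2k_inv_local
       nth_F2k_local rho_rho_inv[OF nth_in_alphA[OF assms(1)]])

lemma F2k_inv_local_F2k_inv_local_cong:
  assumes "d \<in> alphA k" "e \<in> alphA k" "x \<in> alphA k" "x' \<in> alphA k"
  shows "F2k_inv_local d (F2k_inv_local e x) = F2k_inv_local d (F2k_inv_local e x')"
  using assms
  by (intro nth_equalityI)
     (simp_all add: length_F2k_inv_local length_alphA nth_F2k_inv_local rho_inv_rho_inv_cong)

definition gated_F2k :: "(nat \<Rightarrow> bool) \<Rightarrow> (nat \<Rightarrow> nat list) \<Rightarrow> (nat \<Rightarrow> nat list)" where
  "gated_F2k g a i = (if g i then F2k_local (a i) (a (Suc i)) else a i)"

text \<open>In the inner call, d (i + 2) stands in for the unknown cell a (i + 2) of the preimage.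
  This is harmless: rho_inv y d depends on y only through whether y = 1, and rho_inv y d = 1
  iff d = 2, so the result does not depend on that cell at all.\<close>

definition gated_F2k_inv :: "(nat \<Rightarrow> bool) \<Rightarrow> (nat \<Rightarrow> nat list) \<Rightarrow> (nat \<Rightarrow> nat list)" where
  "gated_F2k_inv g d i =
     (if g i then F2k_inv_local (d i)
        (if g (Suc i) then F2k_inv_local (d (Suc i)) (d (Suc (Suc i))) else d (Suc i))
      else d i)"

lemma gated_F2k_configs: "a \<in> configs (alphA k) \<Longrightarrow> gated_F2k g a \<in> configs (alphA k)"
  by (simp add: configs_def gated_F2k_def F2k_local_in_alphA)

lemma gated_F2k_inv_configs: "d \<in> configs (alphA k) \<Longrightarrow> gated_F2k_inv g d \<in> configs (alphA k)"
  by (simp add: configs_def gated_F2k_inv_def F2k_inv_local_in_alphA)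

lemma gated_F2k_gated_F2k_inv:
  assumes d: "d \<in> configs (alphA k)"
  shows "gated_F2k g (gated_F2k_inv g d) = d"
proof
  fix i
  let ?c = "gated_F2k_inv g d"
  have dv: "d j \<in> alphA k" and cv: "?c j \<in> alphA k" for j
    using d gated_F2k_inv_configs[OF d] by (auto simp: configs_def)
  have c_i: "?c i = F2k_inv_local (d i) (?c (Suc i))" if "g i"
  proof (cases "g (Suc i)")
    case True
    define x where "x = (if g (Suc (Suc i))
      then F2k_inv_local (d (Suc (Suc i))) (d (Suc (Suc (Suc i)))) else d (Suc (Suc i)))"
    have x: "x \<in> alphA k" using dv F2k_inv_local_in_alphA[OF dv dv] by (simp add: x_def)
    have "?c i = F2k_inv_local (d i) (F2k_inv_local (d (Suc i)) (d (Suc (Suc i))))"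
      using that True by (simp add: gated_F2k_inv_def)
    also have "\<dots> = F2k_inv_local (d i) (F2k_inv_local (d (Suc i)) x)"
      by (rule F2k_inv_local_F2k_inv_local_cong[OF dv dv dv x])
    also have "\<dots> = F2k_inv_local (d i) (?c (Suc i))"
      using True by (simp add: gated_F2k_inv_def x_def)
    finally show ?thesis .
  qed (use that in \<open>simp add: gated_F2k_inv_def\<close>)
  show "gated_F2k g ?c i = d i"
  proof (cases "g i")
    case True
    then have "gated_F2k g ?c i = F2k_local (F2k_inv_local (d i) (?c (Suc i))) (?c (Suc i))"
      using c_i by (simp add: gated_F2k_def)
    then show ?thesis using F2k_local_F2k_inv_local[OF dv cv] by simp
  qed (simp add: gated_F2k_def gated_F2k_inv_def)
qed

lemma gated_F2k_inv_gated_F2k: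
  assumes a: "a \<in> configs (alphA k)"
  shows "gated_F2k_inv g (gated_F2k g a) = a"
proof
  fix i
  let ?d = "gated_F2k g a"
  have av: "a j \<in> alphA k" and dv: "?d j \<in> alphA k" for j
    using a gated_F2k_configs[OF a] by (auto simp: configs_def)
  have undo: "F2k_inv_local (?d j) (a (Suc j)) = a j" if "g j" for j
    using that F2k_inv_local_F2k_local[OF av av] by (simp add: gated_F2k_def)
  show "gated_F2k_inv g ?d i = a i"
  proof (cases "g i")
    case gi: True
    have "gated_F2k_inv g ?d i = F2k_inv_local (?d i) (a (Suc i))"
    proof (cases "g (Suc i)")
      case True
      have "gated_F2k_inv g ?d i = F2k_inv_local (?d i) (F2k_inv_local (?d (Suc i)) (?d (Suc (Suc i))))"
        using gi True by (simp add: gated_F2k_inv_def)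
      also have "\<dots> = F2k_inv_local (?d i) (F2k_inv_local (?d (Suc i)) (a (Suc (Suc i))))"
        by (rule F2k_inv_local_F2k_inv_local_cong[OF dv dv dv av])
      finally show ?thesis using undo[OF True] by simp
    qed (use gi in \<open>simp add: gated_F2k_inv_def gated_F2k_def\<close>)
    then show ?thesis using undo[OF gi] by simp
  qed (simp add: gated_F2k_inv_def gated_F2k_def)
qed

primrec gated_orbit :: "(nat \<Rightarrow> nat \<Rightarrow> bool) \<Rightarrow> nat \<Rightarrow> (nat \<Rightarrow> nat list) \<Rightarrow> (nat \<Rightarrow> nat list)" where
  "gated_orbit G 0 a = a"
| "gated_orbit G (Suc n) a = gated_F2k (G n) (gated_orbit G n a)"

primrec gated_orbit_inv :: "(nat \<Rightarrow> nat \<Rightarrow> bool) \<Rightarrow> nat \<Rightarrow> (nat \<Rightarrow> nat list) \<Rightarrow> (nat \<Rightarrow> nat list)" where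
  "gated_orbit_inv G 0 d = d"
| "gated_orbit_inv G (Suc n) d = gated_orbit_inv G n (gated_F2k_inv (G n) d)"

lemma gated_orbit_configs: "a \<in> configs (alphA k) \<Longrightarrow> gated_orbit G n a \<in> configs (alphA k)"
  by (induction n) (simp_all add: gated_F2k_configs)

lemma gated_orbit_inv_configs: "d \<in> configs (alphA k) \<Longrightarrow> gated_orbit_inv G n d \<in> configs (alphA k)"
  by (induction n arbitrary: d) (simp_all add: gated_F2k_inv_configs)

lemma gated_orbit_inv_gated_orbit:
  assumes "a \<in> configs (alphA k)"
  shows "gated_orbit_inv G n (gated_orbit G n a) = a"
proof (induction n)
  case (Suc n)
  then show ?case
    using gated_F2k_inv_gated_F2k[OF gated_orbit_configs[OF assms]] by simp
qed simp

lemma gated_orbit_gated_orbit_inv: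
  assumes "d \<in> configs (alphA k)"
  shows "gated_orbit G n (gated_orbit_inv G n d) = d"
  using assms
proof (induction n arbitrary: d)
  case (Suc n)
  then show ?case
    using gated_F2k_gated_F2k_inv gated_F2k_inv_configs by simp
qed simp

lemma gated_orbit_open: "(\<And>n i. G n i) \<Longrightarrow> gated_orbit G n a = (ca2 F2k_local ^^ n) a"
  by (induction n) (simp_all add: gated_F2k_def ca2_def fun_eq_iff)

lemma gated_orbit_stable:
  assumes "\<And>n i. N \<le> n \<Longrightarrow> \<not> G n i"
  shows "gated_orbit G (N + m) a = gated_orbit G N a"
  by (induction m) (simp_all add: assms gated_F2k_def)

section \<open>The automata calF and calG\<close>

lemma ca2_calF_local_funpow:
  "(ca2 (calF_local Hl q) ^^ n) C =
     (\<lambda>j. (gated_orbit (\<lambda>n i. (ca2 Hl ^^ Suc n) (snd \<circ> C) i \<noteq> q) n (fst \<circ> C) j,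
           (ca2 Hl ^^ n) (snd \<circ> C) j))"
  by (induction n) (auto simp: ca2_def calF_local_def gated_F2k_def)

lemma ca2_calG_local_funpow:
  "(ca2 (calG_local Hl) ^^ n) C = (\<lambda>j. (fst (C j), (ca2 Hl ^^ n) (snd \<circ> C) j))"
  by (induction n) (auto simp: ca2_def calG_local_def)

lemma ca2_calF_local_funpow_stable:
  assumes nil: "\<And>c. (ca2 Hl ^^ N) c = (\<lambda>_. q)"
  shows "(ca2 (calF_local Hl q) ^^ (N + m)) C = (ca2 (calF_local Hl q) ^^ N) C"
proof -
  have "gated_orbit (\<lambda>n i. (ca2 Hl ^^ Suc n) (snd \<circ> C) i \<noteq> q) (N + m) (fst \<circ> C)
      = gated_orbit (\<lambda>n i. (ca2 Hl ^^ Suc n) (snd \<circ> C) i \<noteq> q) N (fst \<circ> C)"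
    by (rule gated_orbit_stable, subst ca2_funpow_const_after[OF nil]) auto
  then show ?thesis
    using ca2_funpow_const_after[OF nil] nil by (simp add: ca2_calF_local_funpow)
qed

lemma ca2_calG_local_funpow_stable:
  assumes nil: "\<And>c. (ca2 Hl ^^ N) c = (\<lambda>_. q)"
  shows "(ca2 (calG_local Hl) ^^ (N + m)) C = (ca2 (calG_local Hl) ^^ N) C"
  using ca2_funpow_const_after[OF nil] nil by (simp add: ca2_calG_local_funpow)

lemma ca_entropy_calG_local_le:
  fixes Hl :: "'b::finite \<Rightarrow> 'b \<Rightarrow> 'b"
  shows "ca_entropy (alphA k \<times> UNIV) (ca2 (calG_local Hl)) \<le> ereal (log 2 (real CARD('b)))"
proof (rule ca_entropy_le_log)
  fix w :: nat
  let ?S = "alphA k \<times> (UNIV :: 'b set)"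
  define E where "E t = PiE {..<w} (\<lambda>_. alphA k) \<times> PiE {..<w + t} (\<lambda>_. UNIV :: 'b set)" for t
  let ?g = "\<lambda>t c. (restrict (fst \<circ> c) {..<w}, restrict (snd \<circ> c) {..<w + t})"
  have "card (st_patterns ?S (ca2 (calG_local Hl)) w t) \<le> card (E t)" for t
  proof (rule st_patterns_finite_card_le[where g = "?g t", THEN conjunct2])
    show "finite (E t)" using finite_alphA by (simp add: E_def finite_PiE)
    show "?g t ` configs ?S \<subseteq> E t"
      by (auto simp: E_def configs_def PiE_iff mem_Times_iff split: if_splits)
    fix c c' :: "nat \<Rightarrow> nat list \<times> 'b" assume "?g t c = ?g t c'"
    then have "\<forall>i<w. fst (c i) = fst (c' i)" "\<forall>i<w + t. snd (c i) = snd (c' i)"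
      by (simp_all add: restrict_lessThan_eq_iff)
    then show "\<forall>i<t. \<forall>j<w. (ca2 (calG_local Hl) ^^ i) c j = (ca2 (calG_local Hl) ^^ i) c' j"
      by (auto simp: ca2_calG_local_funpow intro!: ca2_funpow_cong)
  qed
  moreover have "card (E t) = (card (alphA k) * CARD('b)) ^ w * CARD('b) ^ t" for t
    by (simp add: E_def card_cartesian_product card_PiE power_add power_mult_distrib)
  ultimately show "\<exists>M. \<forall>t. real (card (st_patterns ?S (ca2 (calG_local Hl)) w t))
      \<le> M * real CARD('b) ^ t"
    by (intro exI[of _ "real ((card (alphA k) * CARD('b)) ^ w)"] allI)
       (metis of_nat_le_iff of_nat_mult of_nat_power)
qed simp

lemma ca2_calF_local_funpow_avoiding_nth:
  assumes b: "\<forall>n j. (ca2 Hl ^^ n) b j \<noteq> q" and a: "a \<in> configs (alphA k)" and m: "m < 2 * k"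
  shows "fst ((ca2 (calF_local Hl q) ^^ n) (\<lambda>i. (a i, b i)) j) ! m = (rho_ca ^^ n) (\<lambda>i. a i ! m) j"
proof -
  have "fst ((ca2 (calF_local Hl q) ^^ n) (\<lambda>i. (a i, b i)) j)
      = gated_orbit (\<lambda>n i. (ca2 Hl ^^ Suc n) b i \<noteq> q) n a j"
    by (simp add: ca2_calF_local_funpow o_def)
  also have "\<dots> = (ca2 F2k_local ^^ n) a j"
    using b by (subst gated_orbit_open) blast+
  finally show ?thesis
    using ca2_F2k_local_funpow_nth[OF a m] by simp
qed

lemma card_st_patterns_calF_local_ge:
  fixes Hl :: "'b::finite \<Rightarrow> 'b \<Rightarrow> 'b"
  assumes b: "\<forall>n j. (ca2 Hl ^^ n) b j \<noteq> q"
  shows "2 ^ (k * t) \<le> card (st_patterns (alphA k \<times> UNIV) (ca2 (calF_local Hl q)) 1 t)"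
proof -
  let ?S = "alphA k \<times> (UNIV :: 'b set)" and ?\<Phi> = "ca2 (calF_local Hl q)"
  define N where "N = (t + 1) div 2"
  define I where "I = {..<2 * k} \<times> {..<N}"
  define cf :: "(nat \<times> nat) set \<Rightarrow> nat \<Rightarrow> nat \<Rightarrow> nat"
    where "cf \<beta> m i = (if even i \<and> (m, i div 2) \<in> \<beta> then 1 else 0)" for \<beta> m i
  define config where "config \<beta> = (\<lambda>i. (map (\<lambda>m. cf \<beta> m i) [0..<2 * k], b i))" for \<beta>
  have config_in: "config \<beta> \<in> configs ?S" for \<beta>
    by (auto simp: configs_def config_def alphA_def cf_def)
  have column: "fst ((?\<Phi> ^^ n) (config \<beta>) 0) ! m = (rho_ca ^^ n) (cf \<beta> m) 0"
    if "m < 2 * k" for \<beta> n m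
  proof -
    have "(\<lambda>i. map (\<lambda>m. cf \<beta> m i) [0..<2 * k]) \<in> configs (alphA k)"
      by (auto simp: configs_def alphA_def cf_def)
    from ca2_calF_local_funpow_avoiding_nth[OF b this that] show ?thesis
      using that by (simp add: config_def)
  qed
  have "inj_on (st_pattern ?\<Phi> 1 t \<circ> config) (Pow I)"
  proof (rule inj_onI, rule set_eqI)
    fix \<beta> \<beta>' x
    assume sub: "\<beta> \<in> Pow I" "\<beta>' \<in> Pow I"
      and eq: "(st_pattern ?\<Phi> 1 t \<circ> config) \<beta> = (st_pattern ?\<Phi> 1 t \<circ> config) \<beta>'"
    have agree: "cf \<beta> m i = cf \<beta>' m i" if "m < 2 * k" "i < t" for m i
    proof -
      have "(?\<Phi> ^^ n) (config \<beta>) 0 = (?\<Phi> ^^ n) (config \<beta>') 0" if "n < t" for n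
        using fun_cong[OF fun_cong[OF eq, of n], of 0] that by (simp add: st_pattern_def)
      then have "\<forall>n<t. (rho_ca ^^ n) (cf \<beta> m) 0 = (rho_ca ^^ n) (cf \<beta>' m) 0"
        using column[OF \<open>m < 2 * k\<close>] by metis
      moreover have "parity_config (cf \<gamma> m)" for \<gamma>
        by (auto simp: parity_config_def cf_def)
      ultimately show ?thesis
        using rho_ca_column_inj \<open>i < t\<close> by blast
    qed
    show "x \<in> \<beta> \<longleftrightarrow> x \<in> \<beta>'"
    proof (cases "x \<in> I")
      case True
      obtain m j where x: "x = (m, j)" by fastforce
      with True have "m < 2 * k" "2 * j < t" by (auto simp: I_def N_def)
      from agree[OF this] show ?thesis by (simp add: cf_def x split: if_splits)
    qed (use sub in auto)
  qed
  then have "card (Pow I) \<le> card (st_patterns ?S ?\<Phi> 1 t)"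
    using config_in finite_st_patterns_ca2[of ?S] finite_alphA
    by (subst card_image[symmetric]) (auto simp: st_patterns_eq_image intro!: card_mono)
  moreover have "(2::nat) ^ (k * t) \<le> card (Pow I)"
  proof -
    have "t \<le> 2 * N" unfolding N_def by presburger
    then have "k * t \<le> 2 * k * N" by simp
    then show ?thesis by (simp add: I_def card_Pow card_cartesian_product)
  qed
  ultimately show ?thesis by linarith
qed

lemma ca_entropy_calF_local_ge:
  fixes Hl :: "'b::finite \<Rightarrow> 'b \<Rightarrow> 'b"
  assumes "\<forall>n j. (ca2 Hl ^^ n) b j \<noteq> q"
  shows "ereal (real k) \<le> ca_entropy (alphA k \<times> UNIV) (ca2 (calF_local Hl q))"
proof -
  have "(2 ^ k) ^ t \<le> real (card (st_patterns (alphA k \<times> UNIV) (ca2 (calF_local Hl q)) 1 t))" for t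
    using card_st_patterns_calF_local_ge[OF assms, of k t]
    by (metis of_nat_le_iff of_nat_numeral of_nat_power power_mult)
  from ca_entropy_ge_log[of "2 ^ k", OF _ this] show ?thesis
    by (simp add: log_nat_power)
qed

definition calF_layer_map ::
    "('b \<Rightarrow> 'b \<Rightarrow> 'b) \<Rightarrow> 'b \<Rightarrow> nat \<Rightarrow> (nat \<Rightarrow> nat list \<times> 'b) \<Rightarrow> (nat \<Rightarrow> nat list \<times> 'b)" where
  "calF_layer_map Hl q N C = (\<lambda>j. (fst ((ca2 (calF_local Hl q) ^^ N) C j), snd (C j)))"

lemma bij_betw_calF_layer_map:
  fixes Hl :: "'b \<Rightarrow> 'b \<Rightarrow> 'b"
  shows "bij_betw (calF_layer_map Hl q N) (configs (alphA k \<times> UNIV)) (configs (alphA k \<times> UNIV))"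
proof -
  let ?S = "alphA k \<times> (UNIV :: 'b set)" and ?\<phi> = "calF_layer_map Hl q N"
  define G where "G C n i \<longleftrightarrow> (ca2 Hl ^^ Suc n) (snd \<circ> C) i \<noteq> q" for C :: "nat \<Rightarrow> nat list \<times> 'b" and n i
  define \<psi> where "\<psi> D = (\<lambda>j. (gated_orbit_inv (G D) N (fst \<circ> D) j, snd (D j)))" for D
  have \<phi>_eq: "?\<phi> C = (\<lambda>j. (gated_orbit (G C) N (fst \<circ> C) j, snd (C j)))" for C :: "nat \<Rightarrow> nat list \<times> 'b"
    unfolding calF_layer_map_def G_def ca2_calF_local_funpow by simp
  have G_snd: "G C = G C'" if "snd \<circ> C = snd \<circ> C'" for C C'
    using that by (intro ext) (simp only: G_def)
  have fst_in: "fst \<circ> C \<in> configs (alphA k)" if "C \<in> configs ?S" for C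
    using that by (auto simp: configs_def mem_Times_iff)
  have pair_in: "(\<lambda>j. (a j, snd (C j))) \<in> configs ?S" if "a \<in> configs (alphA k)" for a C
    using that by (auto simp: configs_def)
  show ?thesis
  proof (rule bij_betw_byWitness[where f' = \<psi>])
    show "\<forall>C\<in>configs ?S. \<psi> (?\<phi> C) = C"
    proof
      fix C assume "C \<in> configs ?S"
      moreover have "G (?\<phi> C) = G C" by (rule G_snd) (simp add: \<phi>_eq o_def)
      ultimately show "\<psi> (?\<phi> C) = C"
        by (simp add: \<psi>_def \<phi>_eq o_def gated_orbit_inv_gated_orbit[OF fst_in[simplified o_def]])
    qed
    show "\<forall>D\<in>configs ?S. ?\<phi> (\<psi> D) = D"
    proof
      fix D assume "D \<in> configs ?S"
      moreover have "G (\<psi> D) = G D" by (rule G_snd) (simp add: \<psi>_def o_def)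
      ultimately show "?\<phi> (\<psi> D) = D"
        by (simp add: \<psi>_def \<phi>_eq o_def gated_orbit_gated_orbit_inv[OF fst_in[simplified o_def]])
    qed
    show "?\<phi> ` configs ?S \<subseteq> configs ?S"
      by (auto simp: \<phi>_eq intro!: pair_in gated_orbit_configs fst_in)
    show "\<psi> ` configs ?S \<subseteq> configs ?S"
      by (auto simp: \<psi>_def intro!: pair_in gated_orbit_inv_configs fst_in)
  qed
qed

lemma prefix_determined_calF_layer_map:
  "prefix_determined S (Suc (j + N)) (\<lambda>C. calF_layer_map Hl q N C j)"
  using prefix_determined_ca2_funpow[of S j N "calF_local Hl q"]
  unfolding prefix_determined_def calF_layer_map_def
  by (metis add_Suc less_add_Suc1)

lemma calF_layer_map_shift: "calF_layer_map Hl q N (shift C) = shift (calF_layer_map Hl q N C)"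
  by (simp add: calF_layer_map_def ca2_funpow_shift) (simp add: shift_def)

lemma calF_layer_map_ca2_calF_local:
  assumes nil: "\<And>c. (ca2 Hl ^^ N) c = (\<lambda>_. q)"
  shows "calF_layer_map Hl q N (ca2 (calF_local Hl q) C)
    = ca2 (calG_local Hl) (calF_layer_map Hl q N C)"
proof -
  have "(ca2 (calF_local Hl q) ^^ N) (ca2 (calF_local Hl q) C) = (ca2 (calF_local Hl q) ^^ N) C"
    using ca2_calF_local_funpow_stable[OF nil, of 1 C] by (simp add: funpow_swap1)
  then show ?thesis
    by (simp add: calF_layer_map_def fun_eq_iff ca2_def calF_local_def calG_local_def)
qed

lemma strongly_conjugate_calF_local_calG_local:
  fixes Hl :: "'b::finite \<Rightarrow> 'b \<Rightarrow> 'b"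
  assumes "\<And>c. (ca2 Hl ^^ N) c = (\<lambda>_. q)"
  shows "strongly_conjugate (alphA k \<times> UNIV) (ca2 (calF_local Hl q)) (ca2 (calG_local Hl))"
proof (rule strongly_conjugateI)
  show "\<exists>M. prefix_determined (alphA k \<times> UNIV) M (\<lambda>C. calF_layer_map Hl q N C j)" for j
    by (rule exI) (rule prefix_determined_calF_layer_map)
qed (use finite_alphA[of k] bij_betw_calF_layer_map calF_layer_map_shift
       calF_layer_map_ca2_calF_local[OF assms] in auto)

theorem mainTheorem2:
  fixes Hl :: "'b::finite \<Rightarrow> 'b \<Rightarrow> 'b" and q :: 'b and k :: nat
  assumes "spreading Hl q"
    and "real k > log 2 (real CARD('b))"
  shows "(\<not> nilpotent_on UNIV (ca2 Hl) \<longrightarrow>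
            ca_entropy (alphA k \<times> UNIV) (ca2 (calF_local Hl q))
              > ca_entropy (alphA k \<times> UNIV) (ca2 (calG_local Hl)))
       \<and> (nilpotent_on UNIV (ca2 Hl) \<longrightarrow>
            strongly_conjugate (alphA k \<times> UNIV) (ca2 (calF_local Hl q)) (ca2 (calG_local Hl))
            \<and> ca_entropy (alphA k \<times> UNIV) (ca2 (calF_local Hl q)) = 0
            \<and> ca_entropy (alphA k \<times> UNIV) (ca2 (calG_local Hl)) = 0)"
proof (intro conjI impI)
  assume "\<not> nilpotent_on UNIV (ca2 Hl)"
  then obtain b where "\<forall>n j. (ca2 Hl ^^ n) b j \<noteq> q"
    using spreading_dichotomy[OF assms(1)] spreading_nilpotent_on_iff[OF assms(1)] by blast
  then have "ereal (real k) \<le> ca_entropy (alphA k \<times> UNIV) (ca2 (calF_local Hl q))"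
    by (rule ca_entropy_calF_local_ge)
  moreover have "ca_entropy (alphA k \<times> UNIV) (ca2 (calG_local Hl)) < ereal (real k)"
    using ca_entropy_calG_local_le[of k Hl] assms(2) by (simp add: order_le_less_trans)
  ultimately show "ca_entropy (alphA k \<times> UNIV) (ca2 (calF_local Hl q))
      > ca_entropy (alphA k \<times> UNIV) (ca2 (calG_local Hl))"
    by simp
next
  assume "nilpotent_on UNIV (ca2 Hl)"
  then obtain N where nil: "\<And>c. (ca2 Hl ^^ N) c = (\<lambda>_. q)"
    using spreading_nilpotent_on_iff[OF assms(1)] by blast
  have fin: "finite (alphA k \<times> (UNIV :: 'b set))"
    using finite_alphA by simp
  show "strongly_conjugate (alphA k \<times> UNIV) (ca2 (calF_local Hl q)) (ca2 (calG_local Hl))"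
    by (rule strongly_conjugate_calF_local_calG_local[OF nil])
  show "ca_entropy (alphA k \<times> UNIV) (ca2 (calF_local Hl q)) = 0"
    by (rule ca_entropy_ca2_eventually_fixed[OF fin ca2_calF_local_funpow_stable[OF nil]])
  show "ca_entropy (alphA k \<times> UNIV) (ca2 (calG_local Hl)) = 0"
    by (rule ca_entropy_ca2_eventually_fixed[OF fin ca2_calG_local_funpow_stable[OF nil]])
qed

end
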